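(* As $\epsilon\to 0^+$, $u^\epsilon(r)\to u(r)$ uniformly for $0\le r\le 1$.
   Context: Let $\mathcal{B}(0,1)$ be the unit ball in $\mathbb{R}^n$ and let $V:[0,1)\to[0,\infty)$ be nonnegative and Lipschitz continuous, viewed as a radially symmetric function $V(x)=V(|x|)$ on $\mathcal{B}(0,1)$. For $\epsilon>0$, $u^\epsilon$ denotes the radially symmetric solution of $|Du^\epsilon|-V=\epsilon\Delta u^\epsilon$ in $\mathcal{B}(0,1)$, $u^\epsilon=0$ on $\partial\mathcal{B}(0,1)$, given explicitly for $|x|=r\in[0,1]$ by $u^\epsilon(r)=\int_r^1\left(\frac{1}{\epsilon}\int_0^s (t/s)^{n-1}e^{(t-s)/\epsilon}V(t)\,dt\right)ds$. Also $u(r)=\int_r^1 V(s)\,ds$ for $|x|=r\in[0,1]$, which is the maximal radially symmetric viscosity solution of $|Du|=V$ in $\mathcal{B}(0,1)$, $u=0$ on $\partial\mathcal{B}(0,1)$. *)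

theory Defs
  imports "HOL-Analysis.Analysis"
begin

text \<open>Radial profile of the viscous solution u^eps in the unit ball of R^n.\<close>
definition u_eps :: "nat \<Rightarrow> (real \<Rightarrow> real) \<Rightarrow> real \<Rightarrow> real \<Rightarrow> real" where
  "u_eps n V \<epsilon> r =
     integral {r..1} (\<lambda>s. (1/\<epsilon>) *
        integral {0..s} (\<lambda>t. (t/s) ^ (n - 1) * exp ((t - s)/\<epsilon>) * V t))"

text \<open>Radial profile of the maximal radially symmetric viscosity solution u.\<close>
definition u_lim :: "(real \<Rightarrow> real) \<Rightarrow> real \<Rightarrow> real" where
  "u_lim V r = integral {r..1} V"

end

theory Submission
  imports Defs
begin

(* The slope w(s) = -(u^eps)'(s) (slope_eps below) is an average of V against the kernel
   (t/s)^(n-1) e^((t-s)/eps)/eps on [0,s], whose mass concentrates in a layer of width eps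
   below s. With M an upper bound for V, Lipschitz continuity gives
   |w(s) - V(s)| <= (L + n M/s) eps, where the term n M/s comes from the factor (t/s)^(n-1)
   (Bernoulli) and from the boundary layer at 0 (e^(-s/eps) <= eps/s), while 0 <= w <= M
   everywhere. Since u^eps(r) - u(r) is the integral of w - V over [r,1], splitting [0,1] at
   sqrt eps gives |u^eps(r) - u(r)| <= (L + (n+1) M) sqrt eps uniformly in r. *)

lemma uniform_limitI_majorant:
  fixes f :: "'a \<Rightarrow> 'b \<Rightarrow> 'c::metric_space"
  assumes "\<forall>\<^sub>F x in F. \<forall>y\<in>S. dist (f x y) (g y) \<le> B x" and "(B \<longlongrightarrow> 0) F"
  shows "uniform_limit S f g F"
proof (rule uniform_limitI)
  fix e :: real assume "0 < e"
  with assms(2) have "\<forall>\<^sub>F x in F. B x < e" by (rule order_tendstoD)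
  with assms(1) show "\<forall>\<^sub>F x in F. \<forall>y\<in>S. dist (f x y) (g y) < e"
    by eventually_elim auto
qed

lemma exp_minus_le_inverse:
  fixes x :: real
  assumes "0 < x"
  shows "exp (-x) \<le> 1/x"
proof -
  have "x \<le> exp x" using exp_ge_add_one_self[of x] by linarith
  then show ?thesis using assms by (simp add: exp_minus inverse_eq_divide frac_le)
qed

lemma power_ge_one_minus_linear:
  fixes t y :: real
  assumes "0 \<le> t" "t \<le> y" "0 < y"
  shows "1 - real m * (y - t) / y \<le> (t/y) ^ m"
proof -
  have "1 + real m * (t/y - 1) \<le> (1 + (t/y - 1)) ^ m"
    by (rule Bernoulli_inequality) (use assms in simp)
  moreover have "real m * (t/y - 1) = - (real m * (y - t) / y)"
    using assms by (simp add: field_simps)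
  ultimately show ?thesis by simp
qed

lemma abs_integral_le_split_bound:
  fixes D :: "real \<Rightarrow> real"
  assumes "continuous_on {0..1} D" "r \<in> {0..1}" "d \<in> {0..1}"
    and "\<And>y. y \<in> {0..d} \<Longrightarrow> \<bar>D y\<bar> \<le> A" "\<And>y. y \<in> {d..1} \<Longrightarrow> \<bar>D y\<bar> \<le> B"
  shows "\<bar>integral {r..1} D\<bar> \<le> A * d + B * (1 - d)"
proof -
  have abs_cont: "continuous_on {a..b} (\<lambda>y. \<bar>D y\<bar>)" if "0 \<le> a" "b \<le> 1" for a b
    using that by (intro continuous_intros continuous_on_subset[OF assms(1)]) auto
  have abs_int: "(\<lambda>y. \<bar>D y\<bar>) integrable_on {a..b}" if "0 \<le> a" "b \<le> 1" for a b
    using abs_cont[OF that] by (rule integrable_continuous_interval)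
  have "D integrable_on {r..1}"
    using assms by (intro integrable_continuous_interval continuous_on_subset[OF assms(1)]) auto
  then have "\<bar>integral {r..1} D\<bar> \<le> integral {r..1} (\<lambda>y. \<bar>D y\<bar>)"
    using integral_norm_bound_integral[OF _ abs_int, of D r 1] assms(2) by auto
  also have "\<dots> \<le> integral {0..1} (\<lambda>y. \<bar>D y\<bar>)"
    using assms(2) by (intro integral_subset_le abs_int) auto
  also have "\<dots> = integral {0..d} (\<lambda>y. \<bar>D y\<bar>) + integral {d..1} (\<lambda>y. \<bar>D y\<bar>)"
    using Henstock_Kurzweil_Integration.integral_combine[where a = 0 and c = d and b = 1 and f = "\<lambda>y. \<bar>D y\<bar>"]
      abs_int[of 0 1] assms(3) by auto
  also have "\<dots> \<le> A * (d - 0) + B * (1 - d)"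
    using integral_bound[OF _ abs_cont, of 0 d A] integral_bound[OF _ abs_cont, of d 1 B] assms
    by (intro add_mono) auto
  finally show ?thesis by simp
qed

lemma exp_kernel_affine_has_integral:
  fixes a b y \<epsilon> :: real
  assumes "0 \<le> y" "0 < \<epsilon>"
  shows "((\<lambda>t. exp ((t - y)/\<epsilon>) * (a + b * (y - t))) has_integral
     \<epsilon> * a + b * \<epsilon>^2 - exp (-y/\<epsilon>) * (\<epsilon> * a + \<epsilon> * b * y + b * \<epsilon>^2)) {0..y}"
proof -
  define G where "G t = \<epsilon> * exp ((t - y)/\<epsilon>) * (a + b * (y - t)) + b * \<epsilon>^2 * exp ((t - y)/\<epsilon>)" for t
  have "((\<lambda>t. exp ((t - y)/\<epsilon>) * (a + b * (y - t))) has_integral (G y - G 0)) {0..y}"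
  proof (rule fundamental_theorem_of_calculus)
    fix t assume "t \<in> {0..y}"
    have "(G has_real_derivative exp ((t - y)/\<epsilon>) * (a + b * (y - t))) (at t within {0..y})"
      unfolding G_def using assms by (auto intro!: derivative_eq_intros simp: field_simps power2_eq_square)
    then show "(G has_vector_derivative exp ((t - y)/\<epsilon>) * (a + b * (y - t))) (at t within {0..y})"
      by (simp add: has_real_derivative_iff_has_vector_derivative)
  qed fact
  moreover have "G y - G 0 = \<epsilon> * a + b * \<epsilon>^2 - exp (-y/\<epsilon>) * (\<epsilon> * a + \<epsilon> * b * y + b * \<epsilon>^2)"
    unfolding G_def by (simp add: algebra_simps)
  ultimately show ?thesis by simp
qed

lemma integral_exp_kernel_le:
  fixes f :: "real \<Rightarrow> real"
  assumes "0 \<le> y" "0 < \<epsilon>" "continuous_on {0..y} f"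
    and "\<And>t. t \<in> {0..y} \<Longrightarrow> f t \<le> a + b * (y - t)"
  shows "integral {0..y} (\<lambda>t. exp ((t - y)/\<epsilon>) * f t)
    \<le> \<epsilon> * a + b * \<epsilon>^2 - exp (-y/\<epsilon>) * (\<epsilon> * a + \<epsilon> * b * y + b * \<epsilon>^2)"
proof -
  note affine = exp_kernel_affine_has_integral[OF assms(1,2), of a b]
  have "integral {0..y} (\<lambda>t. exp ((t - y)/\<epsilon>) * f t)
      \<le> integral {0..y} (\<lambda>t. exp ((t - y)/\<epsilon>) * (a + b * (y - t)))"
    using assms affine
    by (intro integral_le integrable_continuous_interval continuous_intros) auto
  then show ?thesis using affine by (simp add: integral_unique)
qed

lemma integral_exp_kernel_ge:
  fixes f :: "real \<Rightarrow> real"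
  assumes "0 \<le> y" "0 < \<epsilon>" "continuous_on {0..y} f"
    and "\<And>t. t \<in> {0..y} \<Longrightarrow> a + b * (y - t) \<le> f t"
  shows "\<epsilon> * a + b * \<epsilon>^2 - exp (-y/\<epsilon>) * (\<epsilon> * a + \<epsilon> * b * y + b * \<epsilon>^2)
    \<le> integral {0..y} (\<lambda>t. exp ((t - y)/\<epsilon>) * f t)"
proof -
  note affine = exp_kernel_affine_has_integral[OF assms(1,2), of a b]
  have "integral {0..y} (\<lambda>t. exp ((t - y)/\<epsilon>) * (a + b * (y - t)))
      \<le> integral {0..y} (\<lambda>t. exp ((t - y)/\<epsilon>) * f t)"
    using assms affine
    by (intro integral_le integrable_continuous_interval continuous_intros) auto
  then show ?thesis using affine by (simp add: integral_unique)
qed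

definition slope_eps :: "nat \<Rightarrow> (real \<Rightarrow> real) \<Rightarrow> real \<Rightarrow> real \<Rightarrow> real" where
  "slope_eps n V \<epsilon> s = (1/\<epsilon>) * integral {0..s} (\<lambda>t. exp ((t - s)/\<epsilon>) * ((t/s) ^ (n - 1) * V t))"

lemma u_eps_eq_integral_slope_eps: "u_eps n V \<epsilon> r = integral {r..1} (slope_eps n V \<epsilon>)"
  unfolding u_eps_def slope_eps_def
  by (intro arg_cong[where f = "integral {r..1}"] ext) (simp add: mult_ac)

lemma slope_eps_rescaled:
  assumes "0 \<le> s"
  shows "slope_eps n V \<epsilon> s = (s/\<epsilon>) * integral {0..1} (\<lambda>x. exp ((s * x - s)/\<epsilon>) * (x ^ (n - 1) * V (s * x)))"
proof (cases "s = 0")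
  case True
  then show ?thesis by (simp add: slope_eps_def)
next
  case False
  with assms have "0 < s" by simp
  define f where "f = (\<lambda>t. exp ((t - s)/\<epsilon>) * ((t/s) ^ (n - 1) * V t))"
  have "(\<lambda>x. x / s) ` {0..s} = {0..1}"
    using \<open>0 < s\<close> by (auto simp: image_iff field_simps intro!: bexI[where x = "s * _"])
  then have "integral {0..1} (\<lambda>x. f (s * x)) = integral {0..s} f / s"
    using integral_stretch_real[of s 0 s f] \<open>0 < s\<close> by simp
  moreover have "(\<lambda>x. f (s * x)) = (\<lambda>x. exp ((s * x - s)/\<epsilon>) * (x ^ (n - 1) * V (s * x)))"
    using \<open>0 < s\<close> by (simp add: f_def)
  ultimately show ?thesis using \<open>0 < s\<close> by (simp add: slope_eps_def f_def)
qed

lemma continuous_on_slope_eps: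
  assumes "continuous_on {0..1} V"
  shows "continuous_on {0..1} (slope_eps n V \<epsilon>)"
proof -
  have "continuous_on ({0..1} \<times> {0..1}) (\<lambda>p::real \<times> real. V (fst p * snd p))"
    by (rule continuous_on_compose2[OF assms]) (intro continuous_intros, auto simp: mult_le_one)
  then have "continuous_on ({0..1} \<times> cbox 0 1)
      (\<lambda>(s, x). exp ((s * x - s)/\<epsilon>) * (x ^ (n - 1) * V (s * x)))"
    by (simp add: case_prod_beta divide_inverse) (intro continuous_intros)
  from integral_continuous_on_param[OF this]
  have "continuous_on {0..1}
      (\<lambda>s. (s/\<epsilon>) * integral {0..1} (\<lambda>x. exp ((s * x - s)/\<epsilon>) * (x ^ (n - 1) * V (s * x))))"
    unfolding divide_inverse by (intro continuous_intros) simp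
  then show ?thesis by (rule continuous_on_eq) (simp add: slope_eps_rescaled)
qed

context
  fixes W :: "real \<Rightarrow> real" and L M :: real
  assumes lipschitz_W: "L-lipschitz_on {0..1} W"
    and W_range: "\<And>x. x \<in> {0..1} \<Longrightarrow> 0 \<le> W x \<and> W x \<le> M"
begin

lemma continuous_on_W: "continuous_on {0..1} W"
  using lipschitz_W by (rule lipschitz_on_continuous_on)

lemma continuous_on_weighted_W:
  assumes "y \<le> 1"
  shows "continuous_on {0..y} (\<lambda>t. (t/y) ^ m * W t)"
  unfolding divide_inverse using assms
  by (intro continuous_intros continuous_on_subset[OF continuous_on_W]) auto

lemma weighted_W_bounds:
  assumes "t \<in> {0..y}" "y \<le> 1"
  shows "0 \<le> (t/y) ^ m * W t" "(t/y) ^ m * W t \<le> W t"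
  using assms W_range[of t] by (auto intro!: mult_left_le_one_le power_le_one simp: divide_le_eq_1)

lemma slope_eps_nonneg:
  assumes "0 \<le> y" "y \<le> 1" "0 < \<epsilon>"
  shows "0 \<le> slope_eps n W \<epsilon> y"
  using integral_exp_kernel_ge[OF assms(1,3) continuous_on_weighted_W[OF assms(2)], of 0 0 "n - 1"]
    weighted_W_bounds[OF _ assms(2)] assms(3)
  by (simp add: slope_eps_def)

lemma slope_eps_le_bound:
  assumes "0 \<le> y" "y \<le> 1" "0 < \<epsilon>"
  shows "slope_eps n W \<epsilon> y \<le> M"
proof -
  have weighted_le: "(t/y) ^ (n - 1) * W t \<le> M + 0 * (y - t)" if "t \<in> {0..y}" for t
    using weighted_W_bounds(2)[OF that assms(2), of "n - 1"] W_range[of t] that assms by auto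
  have "integral {0..y} (\<lambda>t. exp ((t - y)/\<epsilon>) * ((t/y) ^ (n - 1) * W t))
      \<le> \<epsilon> * M + 0 * \<epsilon>^2 - exp (-y/\<epsilon>) * (\<epsilon> * M + \<epsilon> * 0 * y + 0 * \<epsilon>^2)"
    by (rule integral_exp_kernel_le[OF assms(1,3) continuous_on_weighted_W[OF assms(2)] weighted_le])
  also have "\<dots> \<le> \<epsilon> * M" using W_range[of 0] assms by simp
  finally show ?thesis using assms(3) by (simp add: slope_eps_def pos_divide_le_eq mult_ac)
qed

lemma abs_W_diff_le:
  assumes "t \<in> {0..y}" "y \<le> 1"
  shows "\<bar>W t - W y\<bar> \<le> L * (y - t)"
  using lipschitz_onD[OF lipschitz_W, of t y] assms by (auto simp: dist_real_def)

lemma slope_eps_le_approx: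
  assumes "0 \<le> y" "y \<le> 1" "0 < \<epsilon>"
  shows "slope_eps n W \<epsilon> y \<le> W y + L * \<epsilon>"
proof -
  have weighted_le: "(t/y) ^ (n - 1) * W t \<le> W y + L * (y - t)" if "t \<in> {0..y}" for t
    using weighted_W_bounds(2)[OF that assms(2), of "n - 1"] abs_W_diff_le[OF that assms(2)]
    by linarith
  have "integral {0..y} (\<lambda>t. exp ((t - y)/\<epsilon>) * ((t/y) ^ (n - 1) * W t))
      \<le> \<epsilon> * W y + L * \<epsilon>^2 - exp (-y/\<epsilon>) * (\<epsilon> * W y + \<epsilon> * L * y + L * \<epsilon>^2)"
    by (rule integral_exp_kernel_le[OF assms(1,3) continuous_on_weighted_W[OF assms(2)] weighted_le])
  also have "\<dots> \<le> \<epsilon> * (W y + L * \<epsilon>)"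
    using W_range[of y] lipschitz_on_nonneg[OF lipschitz_W] assms
    by (simp add: algebra_simps power2_eq_square)
  finally show ?thesis using assms(3) by (simp add: slope_eps_def pos_divide_le_eq mult_ac)
qed

lemma slope_eps_ge_approx:
  assumes "1 \<le> n" "0 < y" "y \<le> 1" "0 < \<epsilon>"
  shows "W y - (L + real n * M / y) * \<epsilon> \<le> slope_eps n W \<epsilon> y"
proof -
  define b where "b = L + real (n - 1) * M / y"
  have b_nonneg: "0 \<le> b"
    using lipschitz_on_nonneg[OF lipschitz_W] W_range[of 0] assms by (simp add: b_def)
  have weighted_ge: "W y + (-b) * (y - t) \<le> (t/y) ^ (n - 1) * W t" if t: "t \<in> {0..y}" for t
  proof -
    define c where "c = real (n - 1) * (y - t) / y"
    have "W t \<in> {0..M}" using W_range[of t] t assms by auto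
    moreover have "0 \<le> c" using t assms by (simp add: c_def)
    ultimately have "c * W t \<le> c * M" by (simp add: mult_left_mono)
    then have "W t - c * M \<le> (1 - c) * W t" by (simp add: algebra_simps)
    also have "\<dots> \<le> (t/y) ^ (n - 1) * W t"
      using power_ge_one_minus_linear[of t y "n - 1"] t assms \<open>W t \<in> {0..M}\<close>
      by (intro mult_right_mono) (auto simp: c_def)
    finally show ?thesis using abs_W_diff_le[OF t assms(3)] by (simp add: b_def c_def algebra_simps)
  qed
  have "\<epsilon> * W y - b * \<epsilon>^2 - exp (-y/\<epsilon>) * (\<epsilon> * W y - \<epsilon> * b * y - b * \<epsilon>^2)
      \<le> integral {0..y} (\<lambda>t. exp ((t - y)/\<epsilon>) * ((t/y) ^ (n - 1) * W t))"
    using integral_exp_kernel_ge[OF _ assms(4) continuous_on_weighted_W[OF assms(3)] weighted_ge] assms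
    by simp
  moreover have "exp (-y/\<epsilon>) * (\<epsilon> * W y - \<epsilon> * b * y - b * \<epsilon>^2) \<le> \<epsilon> / y * (\<epsilon> * M)"
  proof -
    have "\<epsilon> * W y \<le> \<epsilon> * M" using W_range[of y] assms by (simp add: mult_left_mono)
    moreover have "0 \<le> \<epsilon> * b * y + b * \<epsilon>^2" using b_nonneg assms by simp
    ultimately have "exp (-y/\<epsilon>) * (\<epsilon> * W y - \<epsilon> * b * y - b * \<epsilon>^2) \<le> exp (-y/\<epsilon>) * (\<epsilon> * M)"
      by (intro mult_left_mono) auto
    also have "\<dots> \<le> \<epsilon> / y * (\<epsilon> * M)"
      using exp_minus_le_inverse[of "y/\<epsilon>"] W_range[of 0] assms by (intro mult_right_mono) auto
    finally show ?thesis .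
  qed
  ultimately have "\<epsilon> * (W y - (b + M / y) * \<epsilon>)
      \<le> integral {0..y} (\<lambda>t. exp ((t - y)/\<epsilon>) * ((t/y) ^ (n - 1) * W t))"
    using assms by (simp add: algebra_simps power2_eq_square)
  moreover have "b + M / y = L + real n * M / y"
    using assms by (simp add: b_def field_simps)
  ultimately show ?thesis using assms(4) by (simp add: slope_eps_def pos_le_divide_eq mult_ac)
qed

lemma dist_u_eps_u_lim_le:
  assumes "1 \<le> n" "0 < \<epsilon>" "\<epsilon> \<le> 1" "r \<in> {0..1}"
  shows "dist (u_eps n W \<epsilon> r) (u_lim W r) \<le> (L + real (n + 1) * M) * sqrt \<epsilon>"
proof -
  define d where "d = sqrt \<epsilon>"
  have d: "0 < d" "d \<le> 1" "\<epsilon> = d * d" using assms by (auto simp: d_def)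
  have L_nonneg: "0 \<le> L" using lipschitz_W by (rule lipschitz_on_nonneg)
  define D where "D = (\<lambda>y. slope_eps n W \<epsilon> y - W y)"
  have D_cont: "continuous_on {0..1} D"
    unfolding D_def by (intro continuous_intros continuous_on_slope_eps continuous_on_W)
  have "dist (u_eps n W \<epsilon> r) (u_lim W r) = \<bar>integral {r..1} D\<bar>"
  proof -
    have "slope_eps n W \<epsilon> integrable_on {r..1}" "W integrable_on {r..1}"
      using assms(4) by (auto intro!: integrable_continuous_interval
          continuous_on_subset[OF continuous_on_slope_eps[OF continuous_on_W]]
          continuous_on_subset[OF continuous_on_W])
    then show ?thesis
      by (simp add: dist_real_def u_eps_eq_integral_slope_eps u_lim_def D_def integral_diff)
  qed
  also have "\<dots> \<le> M * d + (L + real n * M / d) * \<epsilon> * (1 - d)"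
  proof (rule abs_integral_le_split_bound[OF D_cont assms(4)])
    fix y assume "y \<in> {0..d}"
    then show "\<bar>D y\<bar> \<le> M"
      using slope_eps_nonneg[of y \<epsilon> n] slope_eps_le_bound[of y \<epsilon> n] W_range[of y] d assms
      by (auto simp: D_def)
  next
    fix y assume y: "y \<in> {d..1}"
    have "real n * M / y \<le> real n * M / d"
      using y d W_range[of 0] by (intro divide_left_mono) auto
    then have "(L + real n * M / y) * \<epsilon> \<le> (L + real n * M / d) * \<epsilon>"
      using assms by (intro mult_right_mono) auto
    moreover have "L * \<epsilon> \<le> (L + real n * M / d) * \<epsilon>"
      using assms d W_range[of 0] by (intro mult_right_mono) auto
    moreover have "y \<in> {0<..1}" using y d by auto
    then have "slope_eps n W \<epsilon> y \<le> W y + L * \<epsilon>"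
      and "W y - (L + real n * M / y) * \<epsilon> \<le> slope_eps n W \<epsilon> y"
      using slope_eps_le_approx slope_eps_ge_approx assms by auto
    ultimately show "\<bar>D y\<bar> \<le> (L + real n * M / d) * \<epsilon>"
      unfolding D_def abs_le_iff by (intro conjI) linarith+
  qed (use d in auto)
  also have "\<dots> \<le> M * d + (L + real n * M / d) * \<epsilon>"
    using d assms L_nonneg W_range[of 0] by (intro add_left_mono mult_left_le) auto
  also have "\<dots> = M * d + L * d * d + real n * M * d"
    using d by (simp add: field_simps)
  also have "\<dots> \<le> (L + real (n + 1) * M) * d"
    using d L_nonneg mult_left_le[of d "L * d"] by (simp add: algebra_simps)
  finally show ?thesis by (simp add: d_def)
qed

end

lemma u_eps_cong:
  assumes "\<And>t. t \<in> {0..<1} \<Longrightarrow> V t = W t"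
  shows "u_eps n V \<epsilon> r = u_eps n W \<epsilon> r"
proof -
  have "integral {0..s} (\<lambda>t. (t/s) ^ (n - 1) * exp ((t - s)/\<epsilon>) * V t)
      = integral {0..s} (\<lambda>t. (t/s) ^ (n - 1) * exp ((t - s)/\<epsilon>) * W t)" if "s \<le> 1" for s
    by (intro integral_spike[of "{1}"]) (use assms that in auto)
  then show ?thesis unfolding u_eps_def by (intro integral_cong) auto
qed

lemma u_lim_cong:
  assumes "\<And>t. t \<in> {0..<1} \<Longrightarrow> V t = W t" "0 \<le> r"
  shows "u_lim V r = u_lim W r"
  unfolding u_lim_def by (intro integral_spike[of "{1}"]) (use assms in auto)

lemma nonneg_lipschitz_extension_unit_interval:
  fixes V :: "real \<Rightarrow> real"
  assumes "\<forall>t\<in>{0..<1}. 0 \<le> V t" "L-lipschitz_on {0..<1} V"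
  obtains W where "L-lipschitz_on {0..1} W" "\<And>t. t \<in> {0..<1} \<Longrightarrow> V t = W t"
    "\<And>t. t \<in> {0..1} \<Longrightarrow> 0 \<le> W t \<and> W t \<le> V 0 + L"
proof -
  obtain W where W: "L-lipschitz_on {0..1} W" "\<And>t. t \<in> {0..<1} \<Longrightarrow> W t = V t"
    using lipschitz_extend_closure[OF assms(2)] by auto
  have "0 \<le> W t \<and> W t \<le> V 0 + L" if t: "t \<in> {0..1}" for t
  proof
    have "continuous_on (closure {0..<1}) W"
      using lipschitz_on_continuous_on[OF W(1)] by simp
    then show "0 \<le> W t"
      using continuous_ge_on_closure[of "{0..<1}" W t 0] t W(2) assms(1) by auto
    have "W t - W 0 \<le> L * dist t 0"
      using lipschitz_onD[OF W(1), of t 0] t by (simp add: dist_real_def)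
    moreover have "L * dist t 0 \<le> L"
      using t lipschitz_on_nonneg[OF W(1)] by (simp add: mult_left_le)
    ultimately show "W t \<le> V 0 + L" using W(2)[of 0] by simp
  qed
  with W that show ?thesis by auto
qed

theorem theorem3p1:
  fixes V :: "real \<Rightarrow> real" and n :: nat and L :: real
  assumes "n \<ge> 1"
    and "\<forall>t\<in>{0..<1}. V t \<ge> 0"
    and "L-lipschitz_on {0..<1} V"
  shows "uniform_limit {0..1} (\<lambda>\<epsilon> r. u_eps n V \<epsilon> r) (u_lim V) (at_right 0)"
proof -
  obtain W where W: "L-lipschitz_on {0..1} W" "\<And>t. t \<in> {0..<1} \<Longrightarrow> V t = W t"
    "\<And>t. t \<in> {0..1} \<Longrightarrow> 0 \<le> W t \<and> W t \<le> V 0 + L"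
    using nonneg_lipschitz_extension_unit_interval[OF assms(2,3)] by blast
  define C where "C = L + real (n + 1) * (V 0 + L)"
  have "\<forall>\<^sub>F \<epsilon> in at_right 0. \<forall>r\<in>{0..1}. dist (u_eps n V \<epsilon> r) (u_lim V r) \<le> C * sqrt \<epsilon>"
  proof (rule eventually_at_rightI[of 0 1])
    fix \<epsilon> :: real assume "\<epsilon> \<in> {0<..<1}"
    then show "\<forall>r\<in>{0..1}. dist (u_eps n V \<epsilon> r) (u_lim V r) \<le> C * sqrt \<epsilon>"
      using dist_u_eps_u_lim_le[OF W(1,3) assms(1)] u_eps_cong[OF W(2)] u_lim_cong[OF W(2)]
      by (simp add: C_def)
  qed simp
  moreover have "((\<lambda>\<epsilon>. C * sqrt \<epsilon>) \<longlongrightarrow> 0) (at_right 0)"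
    by (auto intro!: tendsto_eq_intros)
  ultimately show ?thesis by (rule uniform_limitI_majorant)
qed

end
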